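(* Let $S$ be a simple restricted $\mathfrak{D}$-module with central charge $c$ and level $\ell \neq 0$. Assume that $m_S=2n_S>0$. If $r_S=-\infty$, then $c=1$. Moreover, $S= K^{\mathfrak{D}}$ and $K$ is a simple $\mathfrak{h}$-module.
   Context: $\mathfrak{D}$ is the mirror Heisenberg-Virasoro algebra with basis $\{d_m, h_r, \mathbf{c}_1, \mathbf{c}_2 : m\in\mathbb{Z}, r\in\frac12+\mathbb{Z}\}$ and brackets $[d_m,d_n]=(m-n)d_{m+n}+\delta_{m+n,0}\frac{m^3-m}{12}\mathbf{c}_1$, $[d_m,h_r]=-rh_{m+r}$, $[h_r,h_s]=r\delta_{r+s,0}\mathbf{c}_2$, with $\mathbf{c}_1,\mathbf{c}_2$ central. $\mathfrak{h}=\bigoplus_{r\in\frac12+\mathbb{Z}}\mathbb{C}h_r\oplus\mathbb{C}\mathbf{c}_2$ is the twisted Heisenberg subalgebra. A module is restricted if every vector is annihilated by $d_i$ and $h_{i+\frac12}$ for all sufficiently large $i$; central charge $c$ / level $\ell$ means $\mathbf{c}_1$ / $\mathbf{c}_2$ acts as $c$ / $\ell$. For a simple restricted $\mathfrak{D}$-module $S$ of level $\ell\neq0$ define: $S(r)=\{v\in S: h_{r+i+\frac12}v=0\ \forall i\ge0\}$, $n_S=\min\{r\in\mathbb{Z}: S(r)\neq0\}$, $W_0=S(n_S)$; $U(r)=\{v\in W_0: d_{r+i}v=0\ \forall i\ge0\}$, $m_S=\min\{r\in\mathbb{Z}:U(r)\neq0\}$, $U_0=U(m_S)$. Define operators on $S$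 by $L_n=\frac{1}{2\ell}\sum_{k\in\mathbb{Z}+\frac12}h_{n-k}h_k$ for $n\neq0$, $L_0=\frac{1}{2\ell}\sum_{k\in\mathbb{Z}+\frac12}h_{-|k|}h_{|k|}+\frac1{16}$, and $d'_n=d_n-L_n$ ($n\in\mathbb{Z}$); these $d'_n$ commute with all $h_r$. Let $Y_n=\bigcap_{p\ge n}\{v\in U_0: d'_pv=0\}$, $r_S=\min\{n\in\mathbb{Z}: Y_n\neq0\}$, with $r_S=-\infty$ if $Y_n\neq0$ for all $n$; $K_0=Y_{r_S}$ (for $r_S=-\infty$ this means $K_0=\{v\in U_0: d'_pv=0\ \forall p\in\mathbb{Z}\}$), and $K=U(\mathfrak{h})K_0$. For an $\mathfrak{h}$-module $H$ on which $\mathbf{c}_2$ acts as $\ell\neq0$ (restricted), $H^{\mathfrak{D}}$ denotes the $\mathfrak{D}$-module structure on $H$ given by $d_n\mapsto L_n$, $h_r\mapsto h_r$, $\mathbf{c}_1\mapsto1$, $\mathbf{c}_2\mapsto\ell$. *)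

theory Defs
  imports Complex_Main "HOL-Library.Groups_Big_Fun"
begin

text \<open>
The operator d m represents d_m (m integer),
and h j represents h_(j + 1/2) (j integer), so h ranges over h_r, r in 1/2 + Z.
The central elements c_1, c_2 act by the scalars c and l; their action is
built into the bracket relations below.
\<close>

definition mirror_HV_module ::
  "(complex \<Rightarrow> 'v::ab_group_add \<Rightarrow> 'v) \<Rightarrow> (int \<Rightarrow> 'v \<Rightarrow> 'v) \<Rightarrow> (int \<Rightarrow> 'v \<Rightarrow> 'v)
     \<Rightarrow> complex \<Rightarrow> complex \<Rightarrow> bool" where
  "mirror_HV_module sc d h c l \<longleftrightarrow>
     vector_space sc \<and>
     (\<forall>m. Vector_Spaces.linear sc sc (d m)) \<and>
     (\<forall>j. Vector_Spaces.linear sc sc (h j)) \<and>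
     (\<forall>m n v. d m (d n v) - d n (d m v) =
        sc (of_int (m - n)) (d (m + n) v)
        + (if m + n = 0 then sc ((of_int m ^ 3 - of_int m) / 12 * c) v else 0)) \<and>
     (\<forall>m j v. d m (h j v) - h j (d m v) = sc (- (of_int j + 1/2)) (h (m + j) v)) \<and>
     (\<forall>i j v. h i (h j v) - h j (h i v) =
        (if i + j + 1 = 0 then sc ((of_int i + 1/2) * l) v else 0))"

definition restricted_module :: "(int \<Rightarrow> 'v::zero \<Rightarrow> 'v) \<Rightarrow> (int \<Rightarrow> 'v \<Rightarrow> 'v) \<Rightarrow> bool" where
  "restricted_module d h \<longleftrightarrow> (\<forall>v. \<exists>N. \<forall>i\<ge>N. d i v = 0 \<and> h i v = 0)"

definition invariant_under :: "('i \<Rightarrow> 'v \<Rightarrow> 'v) \<Rightarrow> 'v set \<Rightarrow> bool" where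
  "invariant_under f W \<longleftrightarrow> (\<forall>i. \<forall>w\<in>W. f i w \<in> W)"

definition simple_D_module ::
  "(complex \<Rightarrow> 'v::ab_group_add \<Rightarrow> 'v) \<Rightarrow> (int \<Rightarrow> 'v \<Rightarrow> 'v) \<Rightarrow> (int \<Rightarrow> 'v \<Rightarrow> 'v) \<Rightarrow> bool" where
  "simple_D_module sc d h \<longleftrightarrow> (UNIV::'v set) \<noteq> {0} \<and>
     (\<forall>W. module.subspace sc W \<and> invariant_under d W \<and> invariant_under h W
          \<longrightarrow> W = {0} \<or> W = UNIV)"

text \<open>Simple h-module structure on a subspace K (c_2 acts by the scalar l automatically).\<close>
definition simple_h_submodule ::
  "(complex \<Rightarrow> 'v::ab_group_add \<Rightarrow> 'v) \<Rightarrow> (int \<Rightarrow> 'v \<Rightarrow> 'v) \<Rightarrow> 'v set \<Rightarrow> bool" where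
  "simple_h_submodule sc h K \<longleftrightarrow> module.subspace sc K \<and> invariant_under h K \<and> K \<noteq> {0} \<and>
     (\<forall>W. module.subspace sc W \<and> W \<subseteq> K \<and> invariant_under h W \<longrightarrow> W = {0} \<or> W = K)"

definition S_sub :: "(int \<Rightarrow> 'v::zero \<Rightarrow> 'v) \<Rightarrow> int \<Rightarrow> 'v set" where
  "S_sub h r = {v. \<forall>i\<ge>0. h (r + i) v = 0}"

definition U_sub :: "(int \<Rightarrow> 'v::zero \<Rightarrow> 'v) \<Rightarrow> (int \<Rightarrow> 'v \<Rightarrow> 'v) \<Rightarrow> int \<Rightarrow> int \<Rightarrow> 'v set" where
  "U_sub d h nS r = {v \<in> S_sub h nS. \<forall>i\<ge>0. d (r + i) v = 0}"

text \<open>Sugawara-type operators L_n (the sums are finite on a restricted module).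
  With k = j + 1/2: h_(n-k) = h (n - j - 1); for L_0 the term h_(-|k|) h_(|k|) is
  h (-j-1) (h j v) if j >= 0 and h j (h (-j-1) v) if j < 0.\<close>
definition L_op :: "(complex \<Rightarrow> 'v::ab_group_add \<Rightarrow> 'v) \<Rightarrow> (int \<Rightarrow> 'v \<Rightarrow> 'v) \<Rightarrow> complex \<Rightarrow> int \<Rightarrow> 'v \<Rightarrow> 'v" where
  "L_op sc h l n v =
     (if n \<noteq> 0 then sc (1 / (2 * l)) (Sum_any (\<lambda>j. h (n - j - 1) (h j v)))
      else sc (1 / (2 * l)) (Sum_any (\<lambda>j. if j \<ge> 0 then h (- j - 1) (h j v) else h j (h (- j - 1) v)))
           + sc (1/16) v)"

definition d_prime :: "(complex \<Rightarrow> 'v::ab_group_add \<Rightarrow> 'v) \<Rightarrow> (int \<Rightarrow> 'v \<Rightarrow> 'v) \<Rightarrow> (int \<Rightarrow> 'v \<Rightarrow> 'v)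
    \<Rightarrow> complex \<Rightarrow> int \<Rightarrow> 'v \<Rightarrow> 'v" where
  "d_prime sc d h l n v = d n v - L_op sc h l n v"

definition Y_sub :: "(complex \<Rightarrow> 'v::ab_group_add \<Rightarrow> 'v) \<Rightarrow> (int \<Rightarrow> 'v \<Rightarrow> 'v) \<Rightarrow> (int \<Rightarrow> 'v \<Rightarrow> 'v)
    \<Rightarrow> complex \<Rightarrow> 'v set \<Rightarrow> int \<Rightarrow> 'v set" where
  "Y_sub sc d h l U0 n = {v \<in> U0. \<forall>p\<ge>n. d_prime sc d h l p v = 0}"

definition h_generated :: "(complex \<Rightarrow> 'v::ab_group_add \<Rightarrow> 'v) \<Rightarrow> (int \<Rightarrow> 'v \<Rightarrow> 'v) \<Rightarrow> 'v set \<Rightarrow> 'v set" where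
  "h_generated sc h K0 = \<Inter> {W. module.subspace sc W \<and> K0 \<subseteq> W \<and> invariant_under h W}"

end

theory Submission
  imports Defs
begin

text \<open>
The operators d'_n = d_n - L_n commute with all h_r and all L_m, and they satisfy the Witt
relations [d'_a, d'_b] = (a - b) d'_(a+b) whenever a, b and a + b are nonzero.  A nonzero vector
of Y_(-2) is killed by d'_(-1) and d'_(-2), hence, bracketing repeatedly with d'_(-1), by every
d'_p.  The joint kernel of the d'_p is a D-submodule, so by simplicity d_n = L_n on all of S.
Comparing [d_2, d_(-2)] = 4 d_0 + c/2 with the Sugawara relation [L_2, L_(-2)] = 4 L_0 + 1/2
gives c = 1, and since every h-submodule is now a D-submodule, K = S is a simple h-module.
\<close>

abbreviation finite_support :: "('i \<Rightarrow> 'a::zero) \<Rightarrow> bool" where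
  "finite_support g \<equiv> finite {j. g j \<noteq> 0}"

lemma finite_support_mono:
  "finite_support g \<Longrightarrow> (\<And>j. g j = 0 \<Longrightarrow> f j = 0) \<Longrightarrow> finite_support f"
  by (rule finite_subset[of _ "{j. g j \<noteq> 0}"]) auto

lemma finite_support_add:
  fixes f g :: "'i \<Rightarrow> 'a::monoid_add"
  shows "finite_support f \<Longrightarrow> finite_support g \<Longrightarrow> finite_support (\<lambda>j. f j + g j)"
  by (rule finite_subset[of _ "{j. f j \<noteq> 0} \<union> {j. g j \<noteq> 0}"]) auto

lemma finite_support_shift:
  fixes g :: "int \<Rightarrow> 'a::zero"
  assumes "finite_support g"
  shows "finite_support (\<lambda>j. g (j + a))"
proof -
  have "{j. g (j + a) \<noteq> 0} = (\<lambda>k. k - a) ` {j. g j \<noteq> 0}"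
    by (auto simp: image_iff) (metis add_diff_cancel)
  then show ?thesis using assms by simp
qed

lemma Sum_any_shift: "Sum_any (\<lambda>j. g (j + a)) = Sum_any (g :: int \<Rightarrow> 'a::comm_monoid_add)"
proof -
  have "bij (\<lambda>j::int. j + a)"
    by (rule bijI) (auto simp: inj_def surj_def intro!: exI[of _ "_ - a"])
  then show ?thesis by (rule Sum_any.reindex_cong[symmetric]) (simp add: o_def)
qed

lemma Sum_any_additive:
  fixes f :: "'a::ab_group_add \<Rightarrow> 'b::ab_group_add"
  assumes add: "\<And>x y. f (x + y) = f x + f y" and fin: "finite_support g"
  shows "f (Sum_any g) = Sum_any (\<lambda>j. f (g j))"
proof -
  have f0: "f 0 = 0" using add[of 0 0] by simp
  have "f (sum g A) = (\<Sum>j\<in>A. f (g j))" for A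
    by (induct A rule: infinite_finite_induct) (simp_all add: f0 add)
  moreover have "Sum_any g = sum g {j. g j \<noteq> 0}"
    by (rule Sum_any.expand_superset[OF fin]) simp
  moreover have "Sum_any (\<lambda>j. f (g j)) = sum (\<lambda>j. f (g j)) {j. g j \<noteq> 0}"
    by (rule Sum_any.expand_superset[OF fin]) (auto simp: f0)
  ultimately show ?thesis by simp
qed

lemma witt_kernel_negative:
  fixes scale :: "'a::field_char_0 \<Rightarrow> 'v::ab_group_add \<Rightarrow> 'v" and E :: "int \<Rightarrow> 'v \<Rightarrow> 'v"
  assumes "vector_space scale"
    and bracket: "\<And>a b v. a \<noteq> 0 \<Longrightarrow> b \<noteq> 0 \<Longrightarrow> a + b \<noteq> 0 \<Longrightarrow>
      E a (E b v) = E b (E a v) + scale (of_int (a - b)) (E (a + b) v)"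
    and E_zero: "\<And>a. E a 0 = 0"
    and kernel: "E (-1) v = 0" "E (-2) v = 0"
    and "p < 0"
  shows "E p v = 0"
proof -
  interpret vector_space scale by fact
  have "E (-2 - int n) v = 0" for n
  proof (induction n)
    case 0
    show ?case using kernel by simp
  next
    case (Suc n)
    have "scale (of_int (-1 - (-2 - int n))) (E (-1 + (-2 - int n)) v) = 0"
      using bracket[of "-1" "-2 - int n" v] Suc.IH kernel E_zero by simp
    moreover have "(of_int (-1 - (-2 - int n)) :: 'a) = of_nat (Suc n)" by simp
    ultimately have "E (-1 + (-2 - int n)) v = 0" by (simp del: of_nat_Suc)
    moreover have "-2 - int (Suc n) = -1 + (-2 - int n)" by simp
    ultimately show ?case by simp
  qed
  from this[of "nat (-2 - p)"] show ?thesis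
    using kernel \<open>p < 0\<close> by (cases "p = -1") simp_all
qed

lemma h_generated_subspace:
  assumes "vector_space sc"
  shows "module.subspace sc (h_generated sc h K0)"
proof -
  interpret vector_space sc by fact
  show ?thesis unfolding h_generated_def by (rule subspace_Inter) blast
qed

lemma h_generated_invariant: "invariant_under h (h_generated sc h K0)"
  unfolding h_generated_def invariant_under_def by blast

lemma h_generated_superset: "K0 \<subseteq> h_generated sc h K0"
  unfolding h_generated_def by blast

locale mirror_HV =
  fixes sc :: "complex \<Rightarrow> 'v::ab_group_add \<Rightarrow> 'v" and d h :: "int \<Rightarrow> 'v \<Rightarrow> 'v"
    and c l :: complex
  assumes module: "mirror_HV_module sc d h c l"
    and restricted: "restricted_module d h"
    and level_nonzero: "l \<noteq> 0"
begin

sublocale vs: vector_space sc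
  using module by (simp add: mirror_HV_module_def)

abbreviation L where "L \<equiv> L_op sc h l"
abbreviation d' where "d' \<equiv> d_prime sc d h l"

lemma h_linear: "Vector_Spaces.linear sc sc (h j)"
  and d_linear: "Vector_Spaces.linear sc sc (d j)"
  using module by (simp_all add: mirror_HV_module_def)

lemma h_add: "h j (x + y) = h j x + h j y"
  and h_scale: "h j (sc a x) = sc a (h j x)"
  and h_zero [simp]: "h j 0 = 0"
  and h_diff: "h j (x - y) = h j x - h j y"
  using h_linear[of j]
  by (simp_all add: linear_iff_module_hom module_hom.add module_hom.scale module_hom.zero
      module_hom.diff)

lemma d_add: "d j (x + y) = d j x + d j y"
  and d_scale: "d j (sc a x) = sc a (d j x)"
  and d_zero [simp]: "d j 0 = 0"
  using d_linear[of j]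
  by (simp_all add: linear_iff_module_hom module_hom.add module_hom.scale module_hom.zero)

lemma h_commute:
  "h i (h j v) = h j (h i v) + (if i + j + 1 = 0 then sc ((of_int i + 1/2) * l) v else 0)"
  (is "?lhs = ?r1 + ?r2")
proof -
  have "?lhs - ?r1 = ?r2"
    using module unfolding mirror_HV_module_def by blast
  then show ?thesis by (simp add: diff_eq_eq)
qed

lemma d_h_commute: "d m (h j v) = h j (d m v) + sc (- (of_int j + 1/2)) (h (m + j) v)"
  (is "?lhs = ?r1 + ?r2")
proof -
  have "?lhs - ?r1 = ?r2"
    using module unfolding mirror_HV_module_def by blast
  then show ?thesis by (simp add: diff_eq_eq)
qed

lemma d_commute: "d m (d n v) = d n (d m v) + (sc (of_int (m - n)) (d (m + n) v)
    + (if m + n = 0 then sc ((of_int m ^ 3 - of_int m) / 12 * c) v else 0))"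
  (is "?lhs = ?r1 + ?r2")
proof -
  have "?lhs - ?r1 = ?r2"
    using module unfolding mirror_HV_module_def by blast
  then show ?thesis by (simp add: diff_eq_eq)
qed

lemma h_eventually_zero: "\<exists>N. \<forall>i\<ge>N. h i v = 0"
  using restricted unfolding restricted_module_def by blast

definition h_pair :: "int \<Rightarrow> 'v \<Rightarrow> int \<Rightarrow> 'v" where
  "h_pair n v j = h (n - j - 1) (h j v)"

text \<open>
  The summands of L_op.  The order of the two factors only matters for n = 0, and there it is
  essential: h_pair 0 v is in general not finitely supported.
\<close>
definition normal_pair :: "int \<Rightarrow> 'v \<Rightarrow> int \<Rightarrow> 'v" where
  "normal_pair n v j = (if n \<noteq> 0 then h (n - j - 1) (h j v)
     else if j \<ge> 0 then h (- j - 1) (h j v) else h j (h (- j - 1) v))"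

lemma L_normal_pair:
  "L n v = sc (1 / (2 * l)) (Sum_any (normal_pair n v)) + (if n = 0 then sc (1/16) v else 0)"
  by (simp add: L_op_def normal_pair_def)

lemma L_h_pair: "n \<noteq> 0 \<Longrightarrow> L n v = sc (1 / (2 * l)) (Sum_any (h_pair n v))"
  by (simp add: L_op_def h_pair_def)

lemma normal_pair_eq:
  "normal_pair n v j = h_pair n v j + (if n = 0 \<and> j < 0 then sc ((of_int j + 1/2) * l) v else 0)"
  using h_commute[of j "- j - 1" v] by (simp add: normal_pair_def h_pair_def)

lemma normal_pair_nonzero: "n \<noteq> 0 \<Longrightarrow> normal_pair n v = h_pair n v"
  by (simp add: fun_eq_iff normal_pair_eq)

lemma finite_support_normal_pair: "finite_support (normal_pair n v)"
proof -
  obtain N where "\<forall>i\<ge>N. h i v = 0" using h_eventually_zero by blast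
  then obtain M where M: "\<And>i. i \<ge> M \<Longrightarrow> h i v = 0" and "M \<ge> 0"
    by (metis max.cobounded1 max.cobounded2 order_trans)
  have "normal_pair n v j = 0" if "j \<notin> {- \<bar>n\<bar> - M .. M}" for j
  proof (cases "n = 0")
    case True
    then show ?thesis using that M[of j] M[of "- j - 1"] \<open>M \<ge> 0\<close>
      by (auto simp: normal_pair_def)
  next
    case False
    then have "normal_pair n v j = h j (h (n - j - 1) v)"
      using h_commute[of "n - j - 1" j v] by (simp add: normal_pair_def)
    then show ?thesis using that M[of j] M[of "n - j - 1"] False
      by (auto simp: normal_pair_def)
  qed
  then have "{j. normal_pair n v j \<noteq> 0} \<subseteq> {- \<bar>n\<bar> - M .. M}" by blast
  then show ?thesis by (rule finite_subset) simp
qed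

lemma finite_support_h_pair: "n \<noteq> 0 \<Longrightarrow> finite_support (h_pair n v)"
  using finite_support_normal_pair[of n v] by (simp add: normal_pair_nonzero)

lemma h_pair_h: "h_pair n (h i v) j = h i (h_pair n v j)
    + (if j = - i - 1 then sc (- (of_int i + 1/2) * l) (h (n + i) v) else 0)
    + (if j = n + i then sc (- (of_int i + 1/2) * l) (h (n + i) v) else 0)"
proof -
  have inner: "h_pair n (h i v) j = h (n - j - 1) (h i (h j v))
      + h (n - j - 1) (if j + i + 1 = 0 then sc ((of_int j + 1/2) * l) v else 0)"
    unfolding h_pair_def by (subst h_commute[of j i v]) (simp add: h_add)
  have outer: "h (n - j - 1) (h i (h j v)) = h i (h_pair n v j)
      + (if n - j - 1 + i + 1 = 0 then sc ((of_int (n - j - 1) + 1/2) * l) (h j v) else 0)"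
    unfolding h_pair_def by (rule h_commute)
  have "h (n - j - 1) (if j + i + 1 = 0 then sc ((of_int j + 1/2) * l) v else 0)
      = (if j = - i - 1 then sc (- (of_int i + 1/2) * l) (h (n + i) v) else 0)"
  proof (cases "j = - i - 1")
    case True
    then have j: "complex_of_int j = - of_int i - 1" by simp
    have "(of_int j + 1/2) * l = - (of_int i + 1/2) * l"
      unfolding j by (simp add: algebra_simps)
    moreover have "n - j - 1 = n + i" using True by simp
    ultimately show ?thesis using True by (simp add: h_scale)
  qed auto
  moreover have "(if n - j - 1 + i + 1 = 0 then sc ((of_int (n - j - 1) + 1/2) * l) (h j v) else 0)
      = (if j = n + i then sc (- (of_int i + 1/2) * l) (h (n + i) v) else 0)"
  proof (cases "j = n + i")
    case True
    then have "(of_int (n - j - 1) + 1/2) * l = - (of_int i + 1/2) * l"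
      by (simp add: algebra_simps)
    then show ?thesis using True by simp
  qed auto
  ultimately show ?thesis using inner outer by (simp add: ac_simps)
qed

lemma normal_pair_h: "normal_pair n (h i v) j = h i (normal_pair n v j)
    + (if j = - i - 1 then sc (- (of_int i + 1/2) * l) (h (n + i) v) else 0)
    + (if j = n + i then sc (- (of_int i + 1/2) * l) (h (n + i) v) else 0)"
  by (simp add: normal_pair_eq h_pair_h h_add h_scale ac_simps)

lemma h_Sum_any: "finite_support g \<Longrightarrow> h i (Sum_any g) = Sum_any (\<lambda>j. h i (g j))"
  by (rule Sum_any_additive) (simp_all add: h_add)

lemma scale_Sum_any: "finite_support g \<Longrightarrow> sc a (Sum_any g) = Sum_any (\<lambda>j. sc a (g j))"
  by (rule Sum_any_additive) (simp_all add: vs.scale_right_distrib)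

lemma L_h_commute: "L n (h i v) = h i (L n v) + sc (- (of_int i + 1/2)) (h (n + i) v)"
proof -
  define x where "x = sc (- (of_int i + 1/2) * l) (h (n + i) v)"
  have fin: "finite_support (\<lambda>j. h i (normal_pair n v j))"
    by (rule finite_support_mono[OF finite_support_normal_pair[of n v]]) simp
  have fin_delta: "finite_support (\<lambda>j::int. if j = a then x else 0)" for a
    by (rule finite_subset[of _ "{a}"]) auto
  have "Sum_any (normal_pair n (h i v)) = Sum_any (\<lambda>j. h i (normal_pair n v j)
      + (if j = - i - 1 then x else 0) + (if j = n + i then x else 0))"
    unfolding normal_pair_h x_def ..
  also have "\<dots> = h i (Sum_any (normal_pair n v)) + x + x"
    by (simp add: Sum_any.distrib fin fin_delta finite_support_add
        h_Sum_any finite_support_normal_pair)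
  finally have sum_eq: "Sum_any (normal_pair n (h i v)) = h i (Sum_any (normal_pair n v)) + x + x" .
  have "sc (1 / (2 * l)) x + sc (1 / (2 * l)) x = sc (1 / (2 * l) * 2) x"
    using vs.scale_left_distrib[of "1 / (2 * l)" "1 / (2 * l)" x] by simp
  also have "\<dots> = sc (- (of_int i + 1/2)) (h (n + i) v)"
    using level_nonzero by (simp add: x_def)
  finally have x_eq: "sc (1 / (2 * l)) x + sc (1 / (2 * l)) x = sc (- (of_int i + 1/2)) (h (n + i) v)" .
  show ?thesis
    unfolding L_normal_pair[of n "h i v"] L_normal_pair[of n v] sum_eq x_eq[symmetric]
    by (simp add: h_add h_scale vs.scale_right_distrib ac_simps)
qed

lemma normal_pair_add: "normal_pair n (x + y) = (\<lambda>j. normal_pair n x j + normal_pair n y j)"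
  by (simp add: fun_eq_iff normal_pair_def h_add)

lemma normal_pair_scale: "normal_pair n (sc a x) = (\<lambda>j. sc a (normal_pair n x j))"
  by (simp add: fun_eq_iff normal_pair_def h_scale)

lemma L_add: "L n (x + y) = L n x + L n y"
  unfolding L_normal_pair normal_pair_add
  by (simp add: Sum_any.distrib finite_support_normal_pair vs.scale_right_distrib ac_simps)

lemma L_scale: "L n (sc a x) = sc a (L n x)"
  unfolding L_normal_pair normal_pair_scale
  by (simp add: scale_Sum_any[OF finite_support_normal_pair, symmetric]
      vs.scale_right_distrib vs.scale_left_commute)

lemma L_zero [simp]: "L n 0 = 0"
  using L_add[of n 0 0] by simp

lemma L_diff: "L n (x - y) = L n x - L n y"
  using L_add[of n "x - y" y] by (simp add: eq_diff_eq)

lemma L_invariant: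
  assumes "vs.subspace W" "invariant_under h W" "w \<in> W"
  shows "L n w \<in> W"
proof -
  have "Sum_any (normal_pair n w) = sum (normal_pair n w) {j. normal_pair n w j \<noteq> 0}"
    by (rule Sum_any.expand_superset[OF finite_support_normal_pair]) simp
  also have "\<dots> \<in> W"
    using assms by (intro vs.subspace_sum) (simp_all add: normal_pair_def invariant_under_def)
  finally show ?thesis
    using assms unfolding L_normal_pair by (simp add: vs.subspace_add vs.subspace_scale vs.subspace_0)
qed

lemma L_Sum_any: "finite_support g \<Longrightarrow> L n (Sum_any g) = Sum_any (\<lambda>j. L n (g j))"
  by (rule Sum_any_additive) (simp_all add: L_add)

lemma L_h_pair_commute: "L a (h_pair b v j) = h_pair b (L a v) j
    + sc (- (of_int j + 1/2)) (h_pair (a + b) v (j + a))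
    + sc (- (of_int b - of_int j - 1/2)) (h_pair (a + b) v j)"
proof -
  have "L a (h_pair b v j) = h (b - j - 1) (L a (h j v))
      + sc (- (of_int (b - j - 1) + 1/2)) (h (a + (b - j - 1)) (h j v))"
    unfolding h_pair_def by (rule L_h_commute)
  also have "h (b - j - 1) (L a (h j v))
      = h_pair b (L a v) j + sc (- (of_int j + 1/2)) (h_pair (a + b) v (j + a))"
    unfolding h_pair_def L_h_commute by (simp add: h_add h_scale add.commute)
  finally show ?thesis
    by (simp add: h_pair_def algebra_simps)
qed

lemma L_bracket:
  assumes "a \<noteq> 0" "b \<noteq> 0" "a + b \<noteq> 0"
  shows "L a (L b v) = L b (L a v) + sc (of_int (a - b)) (L (a + b) v)"
proof -
  define g where "g k = sc (- (of_int k - of_int a + 1/2)) (h_pair (a + b) v k)" for k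
  define g' where "g' j = sc (- (of_int b - of_int j - 1/2)) (h_pair (a + b) v j)" for j
  have fin: "finite_support (h_pair b (L a v))" "finite_support g" "finite_support g'"
    using assms unfolding g_def g'_def
    by (auto intro: finite_support_h_pair finite_support_mono[OF finite_support_h_pair[of "a + b" v]])
  have fin_shift: "finite_support (\<lambda>j. g (j + a))"
    using fin(2) by (rule finite_support_shift)
  have g_g': "g k + g' k = sc (of_int (a - b)) (h_pair (a + b) v k)" for k
    unfolding g_def g'_def vs.scale_left_distrib[symmetric] by simp
  have "L a (Sum_any (h_pair b v)) = Sum_any (\<lambda>j. h_pair b (L a v) j + g (j + a) + g' j)"
    using assms by (simp add: L_Sum_any finite_support_h_pair L_h_pair_commute g_def g'_def)
  also have "\<dots> = Sum_any (h_pair b (L a v)) + (Sum_any g + Sum_any g')"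
    using fin fin_shift by (simp add: Sum_any.distrib finite_support_add Sum_any_shift)
  also have "Sum_any g + Sum_any g' = sc (of_int (a - b)) (Sum_any (h_pair (a + b) v))"
    using fin assms
    by (simp add: Sum_any.distrib[symmetric] g_g' scale_Sum_any finite_support_h_pair)
  finally show ?thesis
    using assms unfolding L_h_pair[OF assms(2)] L_h_pair[OF assms(3)] L_scale
    by (simp add: vs.scale_right_distrib vs.scale_left_commute[of "1 / (2 * l)"])
qed

text \<open>
  For a + b = 0 the two h_pair 0 sums produced by L_h_pair_commute diverge separately.  Passing
  to normal order leaves a finite anomaly, which becomes the central term of the Sugawara relation.
\<close>
lemma L_h_pair_commute_2:
  "L 2 (h_pair (-2) v j) = h_pair (-2) (L 2 v) j
    + sc (- (of_int j + 1/2)) (normal_pair 0 v (j + 2)) + sc (of_int j + 5/2) (normal_pair 0 v j)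
    + (if j = -2 \<or> j = -1 then sc (3/4 * l) v else 0)"
proof -
  define A where "A k = (if k < 0 then (of_int k + 1/2) * l else 0)" for k :: int
  have pair0: "h_pair 0 v k = normal_pair 0 v k - sc (A k) v" for k
    by (simp add: normal_pair_eq A_def)
  have anomaly: "(of_int j + 1/2) * A (j + 2) - (of_int j + 5/2) * A j
      = (if j = -2 \<or> j = -1 then 3/4 * l else 0)"
  proof -
    consider "j < -2" | "j = -2" | "j = -1" | "j \<ge> 0" by linarith
    then show ?thesis by cases (simp_all add: A_def algebra_simps)
  qed
  have "L 2 (h_pair (-2) v j) = h_pair (-2) (L 2 v) j
      + sc (- (of_int j + 1/2)) (h_pair 0 v (j + 2)) + sc (of_int j + 5/2) (h_pair 0 v j)"
    using L_h_pair_commute[of 2 "-2" v j] by simp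
  also have "\<dots> = h_pair (-2) (L 2 v) j
      + sc (- (of_int j + 1/2)) (normal_pair 0 v (j + 2)) + sc (of_int j + 5/2) (normal_pair 0 v j)
      + sc ((of_int j + 1/2) * A (j + 2) - (of_int j + 5/2) * A j) v"
    unfolding pair0 by (simp add: algebra_simps)
  finally show ?thesis unfolding anomaly by simp
qed

lemma L_2_Sum_h_pair:
  "L 2 (Sum_any (h_pair (-2) v))
    = Sum_any (h_pair (-2) (L 2 v)) + sc 4 (Sum_any (normal_pair 0 v)) + sc (3/2 * l) v"
proof -
  define g where "g k = sc (- (of_int k - 2 + 1/2)) (normal_pair 0 v k)" for k
  define g' where "g' j = sc (of_int j + 5/2) (normal_pair 0 v j)" for j
  define R where "R j = (if j = -2 \<or> j = -1 then sc (3/4 * l) v else 0)" for j :: int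
  have fin: "finite_support (h_pair (-2) (L 2 v))" "finite_support g" "finite_support g'"
    "finite_support R"
    unfolding g_def g'_def R_def
    by (auto intro: finite_support_h_pair finite_support_mono[OF finite_support_normal_pair[of 0 v]]
        finite_subset[of _ "{-2, -1}"])
  have fin_shift: "finite_support (\<lambda>j. g (j + 2))"
    using fin(2) by (rule finite_support_shift)
  have g_g': "g k + g' k = sc 4 (normal_pair 0 v k)" for k
    unfolding g_def g'_def vs.scale_left_distrib[symmetric] by simp
  have "Sum_any R = sum R {-2, -1}"
    by (rule Sum_any.expand_superset) (auto simp: R_def)
  then have sum_R: "Sum_any R = sc (3/2 * l) v"
    using vs.scale_left_distrib[of "3/4 * l" "3/4 * l" v] by (simp add: R_def)
  have "L 2 (Sum_any (h_pair (-2) v)) = Sum_any (\<lambda>j. h_pair (-2) (L 2 v) j + g (j + 2) + g' j + R j)"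
    by (simp add: L_Sum_any finite_support_h_pair L_h_pair_commute_2 g_def g'_def R_def)
  also have "\<dots> = Sum_any (h_pair (-2) (L 2 v)) + (Sum_any g + Sum_any g') + Sum_any R"
    using fin fin_shift by (simp add: Sum_any.distrib finite_support_add Sum_any_shift)
  also have "Sum_any g + Sum_any g' = sc 4 (Sum_any (normal_pair 0 v))"
    using fin
    by (simp add: Sum_any.distrib[symmetric] g_g' scale_Sum_any finite_support_normal_pair)
  finally show ?thesis
    unfolding sum_R .
qed

lemma L_bracket_2: "L 2 (L (-2) v) = L (-2) (L 2 v) + sc 4 (L 0 v) + sc (1/2) v"
proof -
  have L_neg2: "L (-2) w = sc (1 / (2 * l)) (Sum_any (h_pair (-2) w))" for w
    by (simp add: L_h_pair)
  have L0: "L 0 v = sc (1 / (2 * l)) (Sum_any (normal_pair 0 v)) + sc (1/16) v"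
    by (simp add: L_normal_pair)
  have "sc (1 / (2 * l)) (sc (3/2 * l) v) = sc (3/4) v"
    using level_nonzero by simp
  also have "\<dots> = sc 4 (sc (1/16) v) + sc (1/2) v"
    using vs.scale_left_distrib[of "1/4" "1/2" v] by simp
  finally have anomaly: "sc (1 / (2 * l)) (sc (3/2 * l) v) = sc 4 (sc (1/16) v) + sc (1/2) v" .
  have "L 2 (L (-2) v) = sc (1 / (2 * l)) (L 2 (Sum_any (h_pair (-2) v)))"
    by (simp add: L_neg2 L_scale)
  also have "\<dots> = sc (1 / (2 * l)) (Sum_any (h_pair (-2) (L 2 v)))
      + sc 4 (sc (1 / (2 * l)) (Sum_any (normal_pair 0 v))) + sc (1 / (2 * l)) (sc (3/2 * l) v)"
    by (simp add: L_2_Sum_h_pair vs.scale_right_distrib vs.scale_left_commute)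
  also have "\<dots> = L (-2) (L 2 v) + sc 4 (L 0 v) + sc (1/2) v"
    unfolding anomaly by (simp add: L_neg2 L0 vs.scale_right_distrib ac_simps)
  finally show ?thesis .
qed

lemma d'_add: "d' n (x + y) = d' n x + d' n y"
  by (simp add: d_prime_def d_add L_add)

lemma d'_scale: "d' n (sc a x) = sc a (d' n x)"
  by (simp add: d_prime_def d_scale L_scale vs.scale_right_diff_distrib)

lemma d'_zero [simp]: "d' n 0 = 0"
  by (simp add: d_prime_def)

lemma d'_diff: "d' n (x - y) = d' n x - d' n y"
  using d'_add[of n "x - y" y] by (simp add: eq_diff_eq)

lemma d'_h_commute: "d' n (h i v) = h i (d' n v)"
  by (simp add: d_prime_def d_h_commute L_h_commute h_diff)

lemma d'_L_commute: "d' p (L n v) = L n (d' p v)"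
proof -
  have "normal_pair n (d' p v) = (\<lambda>j. d' p (normal_pair n v j))"
    by (simp add: fun_eq_iff normal_pair_def d'_h_commute)
  moreover have "d' p (Sum_any (normal_pair n v)) = Sum_any (\<lambda>j. d' p (normal_pair n v j))"
    by (rule Sum_any_additive) (simp_all add: d'_add finite_support_normal_pair)
  ultimately have "d' p (Sum_any (normal_pair n v)) = Sum_any (normal_pair n (d' p v))"
    by simp
  then show ?thesis
    unfolding L_normal_pair by (simp add: d'_add d'_scale)
qed

lemma d'_bracket:
  assumes "a \<noteq> 0" "b \<noteq> 0" "a + b \<noteq> 0"
  shows "d' a (d' b v) = d' b (d' a v) + sc (of_int (a - b)) (d' (a + b) v)"
proof -
  have expand: "d' x (d' y v) = d x (d y v) - L x (d y v) - L y (d x v) + L y (L x v)" for x y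
    unfolding d_prime_def[of sc d h l y] d'_diff d'_L_commute
    by (simp add: d_prime_def L_diff algebra_simps)
  have "d a (d b v) = d b (d a v) + sc (of_int (a - b)) (d (a + b) v)"
    using d_commute[of a b v] assms by simp
  then show ?thesis
    unfolding expand L_bracket[OF assms] d_prime_def[of sc d h l "a + b"]
    by (simp add: algebra_simps)
qed

lemma d'_kernel_of_Y:
  assumes "v \<in> Y_sub sc d h l U0 (-2)"
  shows "d' p v = 0"
proof -
  have kernel: "d' q v = 0" if "q \<ge> -2" for q
    using assms that by (simp add: Y_sub_def)
  show ?thesis
  proof (cases "p \<ge> -2")
    case False
    show ?thesis
      by (rule witt_kernel_negative[where scale = sc and E = d', OF vs.vector_space_axioms d'_bracket])
        (use False kernel in simp_all)
  qed (rule kernel)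
qed

lemma d_eq_L:
  assumes simple: "simple_D_module sc d h" and "v \<noteq> 0" "\<And>p. d' p v = 0"
  shows "d n w = L n w"
proof -
  define K where "K = {v. \<forall>p. d' p v = 0}"
  have "vs.subspace K"
    unfolding K_def by (rule vs.subspaceI) (simp_all add: d'_add d'_scale)
  moreover have "invariant_under h K"
    unfolding K_def invariant_under_def by (simp add: d'_h_commute)
  moreover have "invariant_under d K"
  proof -
    have "d' p (d m u) = 0" if "u \<in> K" for m p u
    proof -
      have "d m u = L m u"
        using that by (simp add: K_def d_prime_def)
      then show ?thesis
        using that by (simp add: K_def d'_L_commute)
    qed
    then show ?thesis
      unfolding invariant_under_def K_def by blast
  qed
  moreover have "K \<noteq> {0}"
    using assms unfolding K_def by blast
  ultimately have "K = UNIV"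
    using simple unfolding simple_D_module_def by blast
  then show ?thesis
    unfolding K_def d_prime_def by auto
qed

lemma central_charge_eq_1:
  assumes "(UNIV :: 'v set) \<noteq> {0}" and d_eq: "\<And>n v. d n v = L n v"
  shows "c = 1"
proof -
  obtain u :: 'v where "u \<noteq> 0" using assms(1) by blast
  have "d 2 (d (-2) u) = d (-2) (d 2 u) + (sc 4 (d 0 u) + sc (((2::complex) ^ 3 - 2) / 12 * c) u)"
    using d_commute[of 2 "-2" u] by simp
  then have "sc (((2::complex) ^ 3 - 2) / 12 * c) u = sc (1/2) u"
    unfolding d_eq L_bracket_2 by (simp add: ac_simps)
  then have "sc (((2::complex) ^ 3 - 2) / 12 * c - 1/2) u = 0"
    by (simp add: vs.scale_left_diff_distrib)
  then show ?thesis
    using \<open>u \<noteq> 0\<close> by (simp add: field_simps)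
qed

lemma simple_h_submodule_UNIV:
  assumes simple: "simple_D_module sc d h" and d_eq: "\<And>n v. d n v = L n v"
  shows "simple_h_submodule sc h UNIV"
proof -
  have "W = {0} \<or> W = UNIV" if "vs.subspace W" "invariant_under h W" for W
  proof -
    have "invariant_under d W"
      using that by (simp add: invariant_under_def d_eq L_invariant)
    then show ?thesis
      using simple that unfolding simple_D_module_def by blast
  qed
  moreover have "(UNIV :: 'v set) \<noteq> {0}"
    using simple by (simp add: simple_D_module_def)
  ultimately show ?thesis
    by (auto simp: simple_h_submodule_def invariant_under_def)
qed

lemma h_generated_eq_UNIV:
  assumes "simple_h_submodule sc h UNIV" "v \<in> K0" "v \<noteq> 0"
  shows "h_generated sc h K0 = UNIV"
proof -
  have "vs.subspace (h_generated sc h K0)"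
    by (rule h_generated_subspace[OF vs.vector_space_axioms])
  moreover have "invariant_under h (h_generated sc h K0)"
    by (rule h_generated_invariant)
  ultimately have "h_generated sc h K0 = {0} \<or> h_generated sc h K0 = UNIV"
    using assms(1) unfolding simple_h_submodule_def by blast
  moreover have "v \<in> h_generated sc h K0"
    using assms(2) by (rule subsetD[OF h_generated_superset])
  ultimately show ?thesis
    using assms(3) by blast
qed

end

theorem proposition4p4:
  fixes sc :: "complex \<Rightarrow> 'v::ab_group_add \<Rightarrow> 'v"
    and d h :: "int \<Rightarrow> 'v \<Rightarrow> 'v"
    and c l :: complex and nS mS :: int
  assumes mod: "mirror_HV_module sc d h c l"
    and restr: "restricted_module d h"
    and simple: "simple_D_module sc d h"
    and lnz: "l \<noteq> 0"
    and nS: "S_sub h nS \<noteq> {0}" "\<forall>r. S_sub h r \<noteq> {0} \<longrightarrow> nS \<le> r"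
    and mS: "U_sub d h nS mS \<noteq> {0}" "\<forall>r. U_sub d h nS r \<noteq> {0} \<longrightarrow> mS \<le> r"
    and mn: "mS = 2 * nS" and mpos: "mS > 0"
    and rinf: "\<forall>n. Y_sub sc d h l (U_sub d h nS mS) n \<noteq> {0}"
  shows "c = 1
    \<and> h_generated sc h {v \<in> U_sub d h nS mS. \<forall>p. d_prime sc d h l p v = 0} = UNIV
    \<and> (\<forall>n v. d n v = L_op sc h l n v)
    \<and> simple_h_submodule sc h
        (h_generated sc h {v \<in> U_sub d h nS mS. \<forall>p. d_prime sc d h l p v = 0})"
proof -
  interpret mirror_HV sc d h c l
    using mod restr lnz by unfold_locales
  let ?U0 = "U_sub d h nS mS"
  have "0 \<in> Y_sub sc d h l ?U0 (-2)"
    by (simp add: Y_sub_def U_sub_def S_sub_def)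
  moreover have "Y_sub sc d h l ?U0 (-2) \<noteq> {0}"
    using rinf by simp
  ultimately obtain v0 where v0: "v0 \<in> Y_sub sc d h l ?U0 (-2)" "v0 \<noteq> 0"
    by blast
  have kernel: "d' p v0 = 0" for p
    using v0(1) by (rule d'_kernel_of_Y)
  have d_eq: "d n v = L n v" for n v
    using simple v0(2) kernel by (rule d_eq_L)
  have simple_UNIV: "simple_h_submodule sc h UNIV"
    using simple d_eq by (rule simple_h_submodule_UNIV)
  have "v0 \<in> {v \<in> ?U0. \<forall>p. d' p v = 0}"
    using v0(1) kernel by (simp add: Y_sub_def)
  then have "h_generated sc h {v \<in> ?U0. \<forall>p. d' p v = 0} = UNIV"
    using simple_UNIV v0(2) by (intro h_generated_eq_UNIV)
  moreover have "c = 1"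
    using d_eq v0(2) by (intro central_charge_eq_1) auto
  ultimately show ?thesis
    using simple_UNIV d_eq by simp
qed

end
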